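(* Let $C\subseteq\Pr(\mathbb{T})$ be minimal with respect to being compact, convex, closed under $\hat{}$, and nonempty, and let $\preceq$ be a linear quasi-order on $\mathbb{T}$ such that $s\prec s\,\hat{}\,t$ and $t\prec s\,\hat{}\,t$ for all $s,t\in\mathbb{T}$. Then either (i) for every $\mu\in C$ and every incompatible pair $\sigma<_{\mathrm{lex}}\varsigma$ of finite binary sequences, $\mu$-almost every $t$ satisfies $t/\sigma\prec t/\varsigma$; or (ii) for every $\mu\in C$ and every incompatible pair $\sigma<_{\mathrm{lex}}\varsigma$ of finite binary sequences, $\mu$-almost every $t$ satisfies $t/\varsigma\prec t/\sigma$.
   Context: For $a,b\subseteq(0,1]$ put $a\,\hat{}\,b=\tfrac12 a\cup\tfrac12(b+1)$; $\mathbb{T}$ is the set generated from $\mathbf{1}=\{1\}$ by $\hat{}$ (free binary system on one generator; each $t\neq\mathbf1$ is uniquely $a\,\hat{}\,b$). $\Pr(\mathbb{T})$ is the set of finitely additive probability measures on $\mathbb{T}$, viewed as positive normalized functionals on $\ell^\infty(\mathbb{T})$ with the weak* topology; $(\mu\,\hat{}\,\nu)(f)=\int\int f(x\,\hat{}\,y)\,d\nu(y)\,d\mu(x)$, and $C$ is closed under $\hat{}$ if $\mu\,\hat{}\,\nu\in C$ for $\mu,\nu\in C$. A linear quasi-order is a reflexive transitive relation in which any two elements are comparable; $s\prec t$ means $s\preceq t$ and not $t\preceq s$. For a finite binary sequence $\sigma$, $t/\sigma$ is the subterm at address $\sigma$: $t/\emptyset=t$, $(a\,\hat{}\,b)/0\sigma=a/\sigma$,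 $(a\,\hat{}\,b)/1\sigma=b/\sigma$ (undefined otherwise). Two sequences are incompatible if neither is an initial segment of the other; $<_{\mathrm{lex}}$ is lexicographic order. "$\mu$-almost every $t$ satisfies $P$" means the set of $t$ for which the relevant subterms are defined and $P$ holds has $\mu$-measure $1$. *)

theory Defs
  imports "HOL-Analysis.Analysis"
begin

text \<open>The free binary system on one generator: One is the generator 1,
  Node a b is a hat b.\<close>
datatype tree = One | Node tree tree

definition bdd_fun :: "(tree \<Rightarrow> real) \<Rightarrow> bool" where
  "bdd_fun f \<longleftrightarrow> (\<exists>B. \<forall>t. \<bar>f t\<bar> \<le> B)"

text \<open>Finitely additive probability measures on T, as positive normalized linear
  functionals on l-infinity of T (extended by 0 outside l-infinity, for uniqueness).\<close>
definition is_prob :: "((tree \<Rightarrow> real) \<Rightarrow> real) \<Rightarrow> bool" where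
  "is_prob \<mu> \<longleftrightarrow>
     (\<forall>f g a b. bdd_fun f \<and> bdd_fun g \<longrightarrow> \<mu> (\<lambda>t. a * f t + b * g t) = a * \<mu> f + b * \<mu> g)
   \<and> (\<forall>f. bdd_fun f \<and> (\<forall>t. 0 \<le> f t) \<longrightarrow> 0 \<le> \<mu> f)
   \<and> \<mu> (\<lambda>_. 1) = 1
   \<and> (\<forall>f. \<not> bdd_fun f \<longrightarrow> \<mu> f = 0)"

definition Pr :: "((tree \<Rightarrow> real) \<Rightarrow> real) set" where
  "Pr = {\<mu>. is_prob \<mu>}"

definition hat_meas :: "((tree \<Rightarrow> real) \<Rightarrow> real) \<Rightarrow> ((tree \<Rightarrow> real) \<Rightarrow> real) \<Rightarrow> ((tree \<Rightarrow> real) \<Rightarrow> real)" where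
  "hat_meas \<mu> \<nu> = (\<lambda>f. if bdd_fun f then \<mu> (\<lambda>x. \<nu> (\<lambda>y. f (Node x y))) else 0)"

definition closed_hat :: "((tree \<Rightarrow> real) \<Rightarrow> real) set \<Rightarrow> bool" where
  "closed_hat C \<longleftrightarrow> (\<forall>\<mu>\<in>C. \<forall>\<nu>\<in>C. hat_meas \<mu> \<nu> \<in> C)"

definition convex_meas :: "((tree \<Rightarrow> real) \<Rightarrow> real) set \<Rightarrow> bool" where
  "convex_meas C \<longleftrightarrow> (\<forall>\<mu>\<in>C. \<forall>\<nu>\<in>C. \<forall>a::real. 0 \<le> a \<and> a \<le> 1 \<longrightarrow>
      (\<lambda>f. a * \<mu> f + (1 - a) * \<nu> f) \<in> C)"

text \<open>Compactness is w.r.t. the product (pointwise) topology on functionals, which on Pr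
  coincides with the weak* topology (values at unbounded f are constantly 0 on Pr).\<close>
definition good_set :: "((tree \<Rightarrow> real) \<Rightarrow> real) set \<Rightarrow> bool" where
  "good_set C \<longleftrightarrow> C \<subseteq> Pr \<and> compact C \<and> convex_meas C \<and> closed_hat C \<and> C \<noteq> {}"

definition minimal_good :: "((tree \<Rightarrow> real) \<Rightarrow> real) set \<Rightarrow> bool" where
  "minimal_good C \<longleftrightarrow> good_set C \<and> (\<forall>D. D \<subseteq> C \<and> good_set D \<longrightarrow> D = C)"

definition linear_qo :: "(tree \<Rightarrow> tree \<Rightarrow> bool) \<Rightarrow> bool" where
  "linear_qo le \<longleftrightarrow> (\<forall>x. le x x) \<and> (\<forall>x y z. le x y \<and> le y z \<longrightarrow> le x z)
     \<and> (\<forall>x y. le x y \<or> le y x)"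

definition strict :: "(tree \<Rightarrow> tree \<Rightarrow> bool) \<Rightarrow> tree \<Rightarrow> tree \<Rightarrow> bool" where
  "strict le s t \<longleftrightarrow> le s t \<and> \<not> le t s"

text \<open>Subterm at an address; False = 0 (left), True = 1 (right).\<close>
fun subterm :: "tree \<Rightarrow> bool list \<Rightarrow> tree option" where
  "subterm t [] = Some t"
| "subterm (Node a b) (False # s) = subterm a s"
| "subterm (Node a b) (True # s) = subterm b s"
| "subterm One (_ # _) = None"

definition incompatible :: "bool list \<Rightarrow> bool list \<Rightarrow> bool" where
  "incompatible s r \<longleftrightarrow> \<not> (\<exists>u. r = s @ u) \<and> \<not> (\<exists>u. s = r @ u)"

definition lex_less :: "bool list \<Rightarrow> bool list \<Rightarrow> bool" where
  "lex_less s r \<longleftrightarrow> (s, r) \<in> lexord {(False, True)}"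

definition ae_sub :: "((tree \<Rightarrow> real) \<Rightarrow> real) \<Rightarrow> bool list \<Rightarrow> bool list \<Rightarrow> (tree \<Rightarrow> tree \<Rightarrow> bool) \<Rightarrow> bool" where
  "ae_sub \<mu> s r P \<longleftrightarrow>
     \<mu> (\<lambda>t. if (\<exists>a b. subterm t s = Some a \<and> subterm t r = Some b \<and> P a b) then 1 else 0) = 1"

end

theory Submission
  imports Defs
begin

text \<open>Minimality of C turns any closed, convex condition that is preserved by hat and holds
  somewhere in C into one that holds on all of C. Hence all members of C give the same mass p to a set D
  of trees containing the left child of each of its nodes; if D contains both children, then moreover
  p \<le> p * p because (\<mu> hat \<mu>)(D) \<le> \<mu>(D) * \<mu>(D), so D is almost surely true or almost surely false,
  uniformly over C. This applies to the set S of trees a such that almost every tree lies strictly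
  above a. If S is almost sure, splitting a tree at the address where \<sigma> and \<tau> branch shows that
  almost surely t/\<sigma> \<in> S and then t/\<tau> lies strictly above t/\<sigma>. Otherwise almost every t = x hat y
  has y \<notin> S, which by the same zero-one law makes almost every tree lie strictly below t, and the
  splitting argument gives the reverse order.\<close>

type_synonym functional = "(tree \<Rightarrow> real) \<Rightarrow> real"

definition pr :: "functional \<Rightarrow> (tree \<Rightarrow> bool) \<Rightarrow> real" where
  "pr \<mu> U = \<mu> (\<lambda>t. of_bool (U t))"

lemma bdd_fun_unit_interval: "(\<And>t. 0 \<le> f t \<and> f t \<le> 1) \<Longrightarrow> bdd_fun f"
  unfolding bdd_fun_def by (metis abs_of_nonneg)

lemma bdd_fun_const [simp]: "bdd_fun (\<lambda>_. c)"
  unfolding bdd_fun_def by blast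

lemma bdd_fun_of_bool [simp]: "bdd_fun (\<lambda>t. of_bool (U t))"
  by (rule bdd_fun_unit_interval) simp

lemma bdd_fun_lincomb: "bdd_fun f \<Longrightarrow> bdd_fun g \<Longrightarrow> bdd_fun (\<lambda>t. a * f t + b * g t)"
proof -
  assume "bdd_fun f" "bdd_fun g"
  then obtain B1 B2 where "\<forall>t. \<bar>f t\<bar> \<le> B1" "\<forall>t. \<bar>g t\<bar> \<le> B2"
    unfolding bdd_fun_def by blast
  then have "\<bar>a * f t + b * g t\<bar> \<le> \<bar>a\<bar> * B1 + \<bar>b\<bar> * B2" for t
  proof -
    have "\<bar>a * f t + b * g t\<bar> \<le> \<bar>a\<bar> * \<bar>f t\<bar> + \<bar>b\<bar> * \<bar>g t\<bar>"
      by (metis abs_mult abs_triangle_ineq)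
    also have "\<dots> \<le> \<bar>a\<bar> * B1 + \<bar>b\<bar> * B2"
      using \<open>\<forall>t. \<bar>f t\<bar> \<le> B1\<close> \<open>\<forall>t. \<bar>g t\<bar> \<le> B2\<close> by (intro add_mono mult_left_mono) auto
    finally show ?thesis .
  qed
  then show ?thesis unfolding bdd_fun_def by blast
qed

context
  fixes \<mu> :: functional
  assumes prob: "is_prob \<mu>"
begin

lemma prob_lincomb:
  "bdd_fun f \<Longrightarrow> bdd_fun g \<Longrightarrow> \<mu> (\<lambda>t. a * f t + b * g t) = a * \<mu> f + b * \<mu> g"
  using prob unfolding is_prob_def by blast

lemma prob_const [simp]: "\<mu> (\<lambda>_. c) = c"
proof -
  have "\<mu> (\<lambda>_. c * 1 + 0 * 1) = c * \<mu> (\<lambda>_. 1)"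
    using prob_lincomb[of "\<lambda>_. 1" "\<lambda>_. 1" c 0] by simp
  then show ?thesis using prob unfolding is_prob_def by simp
qed

lemma prob_scale: "bdd_fun f \<Longrightarrow> \<mu> (\<lambda>t. c * f t) = c * \<mu> f"
  using prob_lincomb[of f f c 0] by simp

lemma prob_mono: "bdd_fun f \<Longrightarrow> bdd_fun g \<Longrightarrow> (\<And>t. f t \<le> g t) \<Longrightarrow> \<mu> f \<le> \<mu> g"
proof -
  assume f: "bdd_fun f" and g: "bdd_fun g" and "\<And>t. f t \<le> g t"
  then have "\<forall>t. 0 \<le> 1 * g t + (-1) * f t" by simp
  then have "0 \<le> \<mu> (\<lambda>t. 1 * g t + (-1) * f t)"
    using prob bdd_fun_lincomb[OF g f] unfolding is_prob_def by blast
  then show ?thesis using prob_lincomb[OF g f, of 1 "-1"] by simp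
qed

lemma prob_unit_interval: "(\<And>t. 0 \<le> f t \<and> f t \<le> 1) \<Longrightarrow> 0 \<le> \<mu> f \<and> \<mu> f \<le> 1"
  using prob_mono[of "\<lambda>_. 0" f] prob_mono[of f "\<lambda>_. 1"]
  by (auto simp: bdd_fun_def bdd_fun_unit_interval)

lemma prob_mono_unit_interval:
  "(\<And>t. 0 \<le> f t \<and> f t \<le> 1) \<Longrightarrow> (\<And>t. 0 \<le> g t \<and> g t \<le> 1) \<Longrightarrow> (\<And>t. f t \<le> g t) \<Longrightarrow> \<mu> f \<le> \<mu> g"
  by (rule prob_mono) (auto intro: bdd_fun_unit_interval)

lemma pr_unit_interval [simp]: "0 \<le> pr \<mu> U \<and> pr \<mu> U \<le> 1"
  unfolding pr_def by (rule prob_unit_interval) simp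

lemma pr_const [simp]: "pr \<mu> (\<lambda>_. P) = of_bool P"
  unfolding pr_def by simp

lemma pr_mono: "(\<And>t. U t \<Longrightarrow> V t) \<Longrightarrow> pr \<mu> U \<le> pr \<mu> V"
  unfolding pr_def by (rule prob_mono) auto

lemma pr_const_conj: "pr \<mu> (\<lambda>t. P \<and> U t) = of_bool P * pr \<mu> U"
  by (cases P) simp_all

lemma pr_compl: "pr \<mu> (\<lambda>t. \<not> U t) = 1 - pr \<mu> U"
proof -
  have "(\<lambda>t. of_bool (\<not> U t)) = (\<lambda>t. 1 * 1 + (-1) * of_bool (U t) :: real)" by auto
  moreover have "\<mu> (\<lambda>t. 1 * 1 + (-1) * of_bool (U t)) = 1 * \<mu> (\<lambda>_. 1) + (-1) * pr \<mu> U"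
    unfolding pr_def by (rule prob_lincomb) simp_all
  ultimately show ?thesis unfolding pr_def by simp
qed

end

lemma pr_hat: "pr (hat_meas \<mu> \<nu>) U = \<mu> (\<lambda>x. pr \<nu> (\<lambda>y. U (Node x y)))"
  by (simp add: pr_def hat_meas_def)

context
  fixes \<mu> \<nu> :: functional
  assumes prob: "is_prob \<mu>" "is_prob \<nu>"
begin

lemma pr_hat_le_left:
  assumes "\<And>s t. U (Node s t) \<Longrightarrow> U s"
  shows "pr (hat_meas \<mu> \<nu>) U \<le> pr \<mu> U"
  unfolding pr_hat unfolding pr_def[of \<mu>]
proof (rule prob_mono_unit_interval[OF prob(1)])
  fix x
  have "pr \<nu> (\<lambda>y. U (Node x y)) \<le> pr \<nu> (\<lambda>_. U x)"
    using assms by (intro pr_mono[OF prob(2)]) blast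
  then show "pr \<nu> (\<lambda>y. U (Node x y)) \<le> of_bool (U x)"
    by (simp add: prob(2))
qed (simp_all add: prob(2))

lemma pr_hat_le_mult:
  assumes "\<And>s t. D (Node s t) \<Longrightarrow> D s \<and> D t"
  shows "pr (hat_meas \<mu> \<nu>) D \<le> pr \<nu> D * pr \<mu> D"
proof -
  have "pr (hat_meas \<mu> \<nu>) D \<le> \<mu> (\<lambda>x. pr \<nu> D * of_bool (D x))"
    unfolding pr_hat
  proof (rule prob_mono_unit_interval[OF prob(1)])
    fix x
    have "pr \<nu> (\<lambda>y. D (Node x y)) \<le> pr \<nu> (\<lambda>y. D x \<and> D y)"
      using assms by (intro pr_mono[OF prob(2)]) blast
    then show "pr \<nu> (\<lambda>y. D (Node x y)) \<le> pr \<nu> D * of_bool (D x)"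
      by (simp add: pr_const_conj[OF prob(2)] mult.commute)
  qed (simp_all add: prob(2) mult_le_one)
  also have "\<dots> = pr \<nu> D * pr \<mu> D"
    unfolding pr_def[of \<mu>] by (simp add: prob_scale[OF prob(1)])
  finally show ?thesis .
qed

lemma pr_hat_Node_ge:
  assumes "\<And>x. P x \<Longrightarrow> pr \<nu> (Q x) = 1"
  shows "pr \<mu> P \<le> pr (hat_meas \<mu> \<nu>) (\<lambda>t. \<exists>x y. t = Node x y \<and> P x \<and> Q x y)"
  unfolding pr_hat unfolding pr_def[of \<mu>]
proof (rule prob_mono_unit_interval[OF prob(1)])
  fix x
  have "pr \<nu> (\<lambda>y. \<exists>x' y'. Node x y = Node x' y' \<and> P x' \<and> Q x' y') = of_bool (P x) * pr \<nu> (Q x)"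
    using pr_const_conj[OF prob(2), of "P x" "Q x"] by simp
  then show "of_bool (P x) \<le> pr \<nu> (\<lambda>y. \<exists>x' y'. Node x y = Node x' y' \<and> P x' \<and> Q x' y')"
    using assms[of x] by simp
qed (simp_all add: prob(2))

end

locale minimal_good_set =
  fixes C :: "functional set"
  assumes minimal: "minimal_good C"
begin

lemma good: "good_set C"
  using minimal unfolding minimal_good_def by blast

lemma is_prob_elem: "\<mu> \<in> C \<Longrightarrow> is_prob \<mu>"
  using good unfolding good_set_def Pr_def by auto

lemma hat_closed: "\<mu> \<in> C \<Longrightarrow> \<nu> \<in> C \<Longrightarrow> hat_meas \<mu> \<nu> \<in> C"
  using good unfolding good_set_def closed_hat_def by auto

lemma nonempty: "C \<noteq> {}"
  using good unfolding good_set_def by auto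

lemma minimal_induct:
  assumes closed: "closed {\<mu>. P \<mu>}"
    and convex: "\<And>\<mu> \<nu> a. \<mu> \<in> C \<Longrightarrow> \<nu> \<in> C \<Longrightarrow> P \<mu> \<Longrightarrow> P \<nu> \<Longrightarrow> 0 \<le> a \<Longrightarrow> a \<le> 1
      \<Longrightarrow> P (\<lambda>f. a * \<mu> f + (1 - a) * \<nu> f)"
    and hat: "\<And>\<mu> \<nu>. \<mu> \<in> C \<Longrightarrow> \<nu> \<in> C \<Longrightarrow> P \<mu> \<Longrightarrow> P \<nu> \<Longrightarrow> P (hat_meas \<mu> \<nu>)"
    and witness: "\<exists>\<mu>\<in>C. P \<mu>"
    and "\<mu> \<in> C"
  shows "P \<mu>"
proof -
  let ?D = "C \<inter> {\<mu>. P \<mu>}"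
  have "?D \<subseteq> Pr" "?D \<noteq> {}" "compact ?D"
    using good witness compact_Int_closed[OF _ closed] unfolding good_set_def by auto
  moreover have "convex_meas ?D"
    using good convex unfolding good_set_def convex_meas_def by blast
  moreover have "closed_hat ?D"
    using hat hat_closed unfolding closed_hat_def by blast
  ultimately have "?D = C"
    using minimal unfolding minimal_good_def good_set_def by blast
  then show ?thesis using \<open>\<mu> \<in> C\<close> by blast
qed

lemma closed_pr_le: "closed {\<mu>. pr \<mu> U \<le> c}"
  unfolding pr_def by (rule closed_Collect_le) simp_all

lemma closed_pr_eq: "closed {\<mu>. pr \<mu> U = c}"
  unfolding pr_def by (rule closed_Collect_eq) simp_all

lemma pr_eq_if_left_subterm_closed:
  assumes "\<And>s t. U (Node s t) \<Longrightarrow> U s" and "\<mu> \<in> C" "\<nu> \<in> C"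
  shows "pr \<mu> U = pr \<nu> U"
proof -
  have "pr \<mu> U \<le> pr \<nu> U" if "\<mu> \<in> C" "\<nu> \<in> C" for \<mu> \<nu>
  proof (rule minimal_induct[where P = "\<lambda>\<mu>. pr \<mu> U \<le> pr \<nu> U"])
    show "closed {\<mu>. pr \<mu> U \<le> pr \<nu> U}" by (rule closed_pr_le)
    show "pr (\<lambda>f. a * \<mu>1 f + (1 - a) * \<mu>2 f) U \<le> pr \<nu> U"
      if "pr \<mu>1 U \<le> pr \<nu> U" "pr \<mu>2 U \<le> pr \<nu> U" "0 \<le> a" "a \<le> 1" for \<mu>1 \<mu>2 a
      using that unfolding pr_def by (intro convex_bound_le) auto
    show "pr (hat_meas \<mu>1 \<mu>2) U \<le> pr \<nu> U"
      if "\<mu>1 \<in> C" "\<mu>2 \<in> C" "pr \<mu>1 U \<le> pr \<nu> U" for \<mu>1 \<mu>2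
    proof -
      have "pr (hat_meas \<mu>1 \<mu>2) U \<le> pr \<mu>1 U"
        by (rule pr_hat_le_left[OF is_prob_elem[OF that(1)] is_prob_elem[OF that(2)], where U = U])
          (rule assms(1))
      then show ?thesis using that(3) by linarith
    qed
  qed (use that in blast)+
  then show ?thesis using assms(2,3) by (meson order_antisym)
qed

definition full :: "(tree \<Rightarrow> bool) \<Rightarrow> bool" where
  "full U \<longleftrightarrow> (\<forall>\<mu>\<in>C. pr \<mu> U = 1)"

lemma full_mono:
  assumes "full U" and "\<And>t. U t \<Longrightarrow> V t"
  shows "full V"
  unfolding full_def
proof
  fix \<mu> assume \<mu>: "\<mu> \<in> C"
  have "pr \<mu> U \<le> pr \<mu> V"
    by (rule pr_mono[OF is_prob_elem[OF \<mu>]]) (rule assms(2))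
  moreover have "pr \<mu> U = 1" using assms(1) \<mu> unfolding full_def by blast
  moreover have "pr \<mu> V \<le> 1" using pr_unit_interval[OF is_prob_elem[OF \<mu>]] by blast
  ultimately show "pr \<mu> V = 1" by linarith
qed

lemma full_if_full_hat:
  assumes "\<And>\<mu> \<nu>. \<mu> \<in> C \<Longrightarrow> \<nu> \<in> C \<Longrightarrow> pr (hat_meas \<mu> \<nu>) U = 1"
  shows "full U"
  unfolding full_def
proof
  fix \<mu> assume "\<mu> \<in> C"
  then show "pr \<mu> U = 1"
  proof (rule minimal_induct[where P = "\<lambda>\<mu>. pr \<mu> U = 1", rotated -1])
    show "closed {\<mu>. pr \<mu> U = 1}" by (rule closed_pr_eq)
    show "pr (\<lambda>f. a * \<mu>1 f + (1 - a) * \<mu>2 f) U = 1"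
      if "pr \<mu>1 U = 1" "pr \<mu>2 U = 1" for \<mu>1 \<mu>2 a
      using that unfolding pr_def by simp
    show "pr (hat_meas \<mu>1 \<mu>2) U = 1" if "\<mu>1 \<in> C" "\<mu>2 \<in> C" for \<mu>1 \<mu>2
      using assms that by blast
    obtain \<nu> where "\<nu> \<in> C" using nonempty by blast
    then show "\<exists>\<mu>\<in>C. pr \<mu> U = 1" using assms hat_closed by blast
  qed
qed

lemma full_or_full_compl:
  assumes "\<And>s t. D (Node s t) \<Longrightarrow> D s \<and> D t"
  shows "full D \<or> full (\<lambda>t. \<not> D t)"
proof -
  obtain \<nu> where \<nu>: "\<nu> \<in> C" using nonempty by blast
  have same: "pr \<mu> D = pr \<nu> D" if "\<mu> \<in> C" for \<mu>
    using pr_eq_if_left_subterm_closed[OF _ that \<nu>] assms by blast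
  have "pr (hat_meas \<nu> \<nu>) D \<le> pr \<nu> D * pr \<nu> D"
    by (rule pr_hat_le_mult[OF is_prob_elem[OF \<nu>] is_prob_elem[OF \<nu>]]) (rule assms)
  then have "pr \<nu> D * 1 \<le> pr \<nu> D * pr \<nu> D"
    using same[OF hat_closed[OF \<nu> \<nu>]] by simp
  moreover have "0 \<le> pr \<nu> D" "pr \<nu> D \<le> 1"
    using pr_unit_interval[OF is_prob_elem[OF \<nu>]] by auto
  ultimately have "pr \<nu> D = 0 \<or> pr \<nu> D = 1"
    by (metis mult_le_cancel_left_pos order_antisym order_le_less)
  then show ?thesis
  proof
    assume "pr \<nu> D = 0"
    then have "full (\<lambda>t. \<not> D t)"
      unfolding full_def using same pr_compl[OF is_prob_elem] by simp
    then show ?thesis ..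
  next
    assume "pr \<nu> D = 1"
    then have "full D" unfolding full_def using same by simp
    then show ?thesis ..
  qed
qed

lemma full_True: "full (\<lambda>_. True)"
  unfolding full_def using pr_const[OF is_prob_elem] by simp

lemma full_Node:
  assumes "full P" and "\<And>x. P x \<Longrightarrow> full (Q x)"
  shows "full (\<lambda>t. \<exists>x y. t = Node x y \<and> P x \<and> Q x y)"
proof (rule full_if_full_hat)
  fix \<mu> \<nu> assume \<mu>: "\<mu> \<in> C" and \<nu>: "\<nu> \<in> C"
  have "pr \<mu> P \<le> pr (hat_meas \<mu> \<nu>) (\<lambda>t. \<exists>x y. t = Node x y \<and> P x \<and> Q x y)"
    by (rule pr_hat_Node_ge[OF is_prob_elem[OF \<mu>] is_prob_elem[OF \<nu>]])
      (use assms(2) \<nu> in \<open>unfold full_def, blast\<close>)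
  moreover have "pr \<mu> P = 1" using assms(1) \<mu> unfolding full_def by blast
  moreover have "pr (hat_meas \<mu> \<nu>) (\<lambda>t. \<exists>x y. t = Node x y \<and> P x \<and> Q x y) \<le> 1"
    using pr_unit_interval[OF is_prob_elem[OF hat_closed[OF \<mu> \<nu>]]] by blast
  ultimately show "pr (hat_meas \<mu> \<nu>) (\<lambda>t. \<exists>x y. t = Node x y \<and> P x \<and> Q x y) = 1"
    by linarith
qed

lemma full_child:
  assumes "full P"
  shows "full (\<lambda>t. \<exists>x y. t = Node x y \<and> P (if b then y else x))"
proof (cases b)
  case True
  have "full (\<lambda>t. \<exists>x y. t = Node x y \<and> True \<and> P y)"
    using full_Node[of "\<lambda>_. True" "\<lambda>_. P"] full_True assms by blast
  with True show ?thesis by simp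
next
  case False
  have "full (\<lambda>t. \<exists>x y. t = Node x y \<and> P x \<and> True)"
    using full_Node[of P "\<lambda>_ _. True"] full_True assms by blast
  with False show ?thesis by simp
qed

end

definition subterms_rel :: "bool list \<Rightarrow> bool list \<Rightarrow> (tree \<Rightarrow> tree \<Rightarrow> bool) \<Rightarrow> tree \<Rightarrow> bool" where
  "subterms_rel \<sigma> \<tau> R t \<longleftrightarrow> (\<exists>a b. subterm t \<sigma> = Some a \<and> subterm t \<tau> = Some b \<and> R a b)"

lemma ae_sub_iff_pr: "ae_sub \<mu> \<sigma> \<tau> R \<longleftrightarrow> pr \<mu> (subterms_rel \<sigma> \<tau> R) = 1"
  unfolding ae_sub_def pr_def subterms_rel_def of_bool_def ..

lemma subterm_Cons_eq_Some:
  "subterm t (b # \<sigma>) = Some a \<longleftrightarrow> (\<exists>x y. t = Node x y \<and> subterm (if b then y else x) \<sigma> = Some a)"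
  by (cases t; cases b) auto

lemma subterms_rel_Cons:
  "subterms_rel (b # \<sigma>) (b # \<tau>) R t \<longleftrightarrow> (\<exists>x y. t = Node x y \<and> subterms_rel \<sigma> \<tau> R (if b then y else x))"
  unfolding subterms_rel_def by (cases t; cases b) auto

lemma lex_less_incompatible_split:
  "incompatible \<sigma> \<tau> \<Longrightarrow> lex_less \<sigma> \<tau> \<Longrightarrow> \<exists>u v w. \<sigma> = u @ False # v \<and> \<tau> = u @ True # w"
  unfolding incompatible_def lex_less_def lexord_def by auto

context minimal_good_set
begin

lemma full_subterm:
  assumes "full U"
  shows "full (\<lambda>t. \<exists>a. subterm t \<tau> = Some a \<and> U a)"
proof (induction \<tau>)
  case Nil
  then show ?case using assms by simp
next
  case (Cons b \<tau>)
  have "(\<lambda>t. \<exists>a. subterm t (b # \<tau>) = Some a \<and> U a)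
      = (\<lambda>t. \<exists>x y. t = Node x y \<and> (\<exists>a. subterm (if b then y else x) \<tau> = Some a \<and> U a))"
    unfolding subterm_Cons_eq_Some by blast
  then show ?case using full_child[OF Cons.IH, of b] by simp
qed

lemma full_subterms_rel:
  assumes "full S" and "\<And>a. S a \<Longrightarrow> full (R a)"
  shows "full (subterms_rel (u @ False # v) (u @ True # w) R)"
proof (induction u)
  case Nil
  have "full (\<lambda>t. \<exists>x y. t = Node x y \<and> (\<exists>a. subterm x v = Some a \<and> S a)
                        \<and> (\<exists>a b. subterm x v = Some a \<and> subterm y w = Some b \<and> R a b))"
  proof (rule full_Node[OF full_subterm[OF assms(1)]])
    fix x assume "\<exists>a. subterm x v = Some a \<and> S a"
    then obtain a where a: "subterm x v = Some a" "S a" by blast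
    have "full (\<lambda>y. \<exists>b. subterm y w = Some b \<and> R a b)"
      by (rule full_subterm) (rule assms(2)[OF a(2)])
    then show "full (\<lambda>y. \<exists>a b. subterm x v = Some a \<and> subterm y w = Some b \<and> R a b)"
      by (rule full_mono) (use a(1) in blast)
  qed
  then show ?case
    by (rule full_mono) (force simp: subterms_rel_def)
next
  case (Cons b u)
  have "subterms_rel ((b # u) @ False # v) ((b # u) @ True # w) R
      = (\<lambda>t. \<exists>x y. t = Node x y \<and> subterms_rel (u @ False # v) (u @ True # w) R (if b then y else x))"
    unfolding append_Cons subterms_rel_Cons ..
  then show ?case using full_child[OF Cons.IH, of b] by simp
qed

end

locale growing_order = minimal_good_set +
  fixes le :: "tree \<Rightarrow> tree \<Rightarrow> bool"
  assumes linear: "linear_qo le"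
    and grow: "\<And>s t. strict le s (Node s t) \<and> strict le t (Node s t)"
begin

lemma le_strict_trans: "le a b \<Longrightarrow> strict le b c \<Longrightarrow> strict le a c"
  using linear unfolding linear_qo_def strict_def by blast

lemma strict_le_trans: "strict le a b \<Longrightarrow> le b c \<Longrightarrow> strict le a c"
  using linear unfolding linear_qo_def strict_def by blast

lemma not_strict: "\<not> strict le a b \<Longrightarrow> le b a"
  using linear unfolding linear_qo_def strict_def by blast

lemma le_Node: "le s (Node s t)" "le t (Node s t)"
  using grow unfolding strict_def by auto

lemma full_below_Node:
  assumes "\<not> full (strict le y)"
  shows "full (\<lambda>b. strict le b (Node x y))"
proof -
  have "\<not> full (\<lambda>b. \<not> strict le b (Node x y))"
  proof
    assume "full (\<lambda>b. \<not> strict le b (Node x y))"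
    then have "full (strict le y)"
      by (rule full_mono) (meson grow not_strict strict_le_trans)
    then show False using assms by blast
  qed
  moreover have "strict le s c \<and> strict le t c" if "strict le (Node s t) c" for s t c
    using that le_Node le_strict_trans by blast
  ultimately show ?thesis
    using full_or_full_compl[of "\<lambda>b. strict le b (Node x y)"] by blast
qed

lemma full_above_or_full_below:
  "full (\<lambda>a. full (strict le a)) \<or> full (\<lambda>a. full (\<lambda>b. strict le b a))"
proof -
  have "full (strict le s) \<and> full (strict le t)" if Node: "full (strict le (Node s t))" for s t
    using full_mono[OF Node, of "strict le s"] full_mono[OF Node, of "strict le t"]
      le_Node le_strict_trans by blast
  then consider "full (\<lambda>a. full (strict le a))" | "full (\<lambda>a. \<not> full (strict le a))"
    using full_or_full_compl[of "\<lambda>a. full (strict le a)"] by blast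
  then show ?thesis
  proof cases
    case 2
    then have "full (\<lambda>t. \<exists>x y. t = Node x y \<and> \<not> full (strict le y))"
      using full_child[of _ True] by simp
    then have "full (\<lambda>a. full (\<lambda>b. strict le b a))"
      by (rule full_mono) (auto intro: full_below_Node)
    then show ?thesis ..
  qed simp
qed

lemma ae_sub_if_full:
  assumes "full S" and "\<And>a. S a \<Longrightarrow> full (R a)" and "\<mu> \<in> C"
    and "incompatible \<sigma> \<tau>" "lex_less \<sigma> \<tau>"
  shows "ae_sub \<mu> \<sigma> \<tau> R"
proof -
  obtain u v w where "\<sigma> = u @ False # v" "\<tau> = u @ True # w"
    using lex_less_incompatible_split assms(4,5) by blast
  moreover have "full (subterms_rel (u @ False # v) (u @ True # w) R)"
    by (rule full_subterms_rel[OF assms(1)]) (rule assms(2))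
  ultimately show ?thesis
    using assms(3) unfolding ae_sub_iff_pr full_def by simp
qed

end

theorem proposition5p4:
  fixes C :: "((tree \<Rightarrow> real) \<Rightarrow> real) set"
    and le :: "tree \<Rightarrow> tree \<Rightarrow> bool"
  assumes "minimal_good C"
    and "linear_qo le"
    and "\<And>s t. strict le s (Node s t) \<and> strict le t (Node s t)"
  shows "(\<forall>\<mu>\<in>C. \<forall>\<sigma> \<tau>. incompatible \<sigma> \<tau> \<and> lex_less \<sigma> \<tau> \<longrightarrow>
            ae_sub \<mu> \<sigma> \<tau> (\<lambda>a b. strict le a b))
       \<or> (\<forall>\<mu>\<in>C. \<forall>\<sigma> \<tau>. incompatible \<sigma> \<tau> \<and> lex_less \<sigma> \<tau> \<longrightarrow>
            ae_sub \<mu> \<sigma> \<tau> (\<lambda>a b. strict le b a))"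
proof -
  interpret growing_order C le
    using assms by unfold_locales auto
  show ?thesis
    using full_above_or_full_below
  proof
    assume "full (\<lambda>a. full (strict le a))"
    then show ?thesis using ae_sub_if_full[where R = "strict le"] by blast
  next
    assume "full (\<lambda>a. full (\<lambda>b. strict le b a))"
    then show ?thesis using ae_sub_if_full[where R = "\<lambda>a b. strict le b a"] by blast
  qed
qed

end
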